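(* The expected number of C3's in the OSW graph $G_n$ that contain at least one long-range edge of type $w$ (that is, directed 3-cycles $(x,y,z)$, counted up to cyclic rotation, of pairwise distinct vertices whose three consecutive pairs are each of type $s$ or $w$ with at least one of type $w$) is $\mathcal{O}\left(n^2/\log n\right)$.
   Context: For an integer $n\ge1$, the $n$-octahedral graph $G'_n=(V,E')$ is the undirected graph with vertex set $V=\{u\in\mathbb{Z}^3:|u_1|+|u_2|+|u_3|=n\}$ and edge set $E'=\{\{v,w\}\subset V: v\neq w,\ |v_i-w_i|\le 1 \text{ for all } i=1,2,3\}$. For $u,v\in V$, $d_{uv}$ denotes the shortest-path distance in $G'_n$, and $Z_u=\left(\sum_{w\in V\setminus\{u\}} d_{uw}^{-2}\right)^{-1}$. The OSW random graph $G_n=(V,E)$ is the directed graph in which, for every $\{u,v\}\in E'$, both $(u,v),(v,u)\in E$, and in addition each vertex $u\in V$, independently of the others, chooses one vertex $v\in V\setminus\{u\}$ with probability $Z_u d_{uv}^{-2}$ and the long-range edge $(u,v)$ is added; $C_{uv}$ denotes the event that $u$ chooses $v$. For an ordered pair $(x,y)$ of distinct vertices, say $(x,y)$ is of type $s$ if $\{x,y\}\in E'$, and of type $w$ if $d_{xy}\ge2$ and $C_{xy}$ occurs. *)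

theory Defs
  imports "HOL-Probability.Probability" "HOL-Library.Landau_Symbols"
begin

type_synonym vtx = "int \<times> int \<times> int"

definition c1 :: "vtx \<Rightarrow> int" where "c1 u = fst u"
definition c2 :: "vtx \<Rightarrow> int" where "c2 u = fst (snd u)"
definition c3 :: "vtx \<Rightarrow> int" where "c3 u = snd (snd u)"

definition octV :: "nat \<Rightarrow> vtx set" where
  "octV n = {u. \<bar>c1 u\<bar> + \<bar>c2 u\<bar> + \<bar>c3 u\<bar> = int n}"

definition octAdj :: "nat \<Rightarrow> vtx \<Rightarrow> vtx \<Rightarrow> bool" where
  "octAdj n v w \<longleftrightarrow> v \<in> octV n \<and> w \<in> octV n \<and> v \<noteq> w \<and>
     \<bar>c1 v - c1 w\<bar> \<le> 1 \<and> \<bar>c2 v - c2 w\<bar> \<le> 1 \<and> \<bar>c3 v - c3 w\<bar> \<le> 1"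

definition octDist :: "nat \<Rightarrow> vtx \<Rightarrow> vtx \<Rightarrow> nat" where
  "octDist n u v = (LEAST k. \<exists>p :: nat \<Rightarrow> vtx. p 0 = u \<and> p k = v \<and>
       (\<forall>i<k. octAdj n (p i) (p (Suc i))))"

definition Zc :: "nat \<Rightarrow> vtx \<Rightarrow> real" where
  "Zc n u = inverse (\<Sum>w\<in>octV n - {u}. 1 / (real (octDist n u w))^2)"

definition choice_pmf :: "nat \<Rightarrow> vtx \<Rightarrow> vtx pmf" where
  "choice_pmf n u = embed_pmf (\<lambda>v. if v \<in> octV n \<and> v \<noteq> u
       then Zc n u / (real (octDist n u v))^2 else 0)"

text \<open>Independent choices of all vertices: c u is the vertex chosen by u,
  so the event C_uv is "c u = v".\<close>
definition osw_pmf :: "nat \<Rightarrow> (vtx \<Rightarrow> vtx) pmf" where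
  "osw_pmf n = Pi_pmf (octV n) (0,0,0) (choice_pmf n)"

definition type_s :: "nat \<Rightarrow> vtx \<Rightarrow> vtx \<Rightarrow> bool" where
  "type_s n x y \<longleftrightarrow> octAdj n x y"

definition type_w :: "nat \<Rightarrow> (vtx \<Rightarrow> vtx) \<Rightarrow> vtx \<Rightarrow> vtx \<Rightarrow> bool" where
  "type_w n c x y \<longleftrightarrow> octDist n x y \<ge> 2 \<and> c x = y"

definition C3w_triples :: "nat \<Rightarrow> (vtx \<Rightarrow> vtx) \<Rightarrow> (vtx \<times> vtx \<times> vtx) set" where
  "C3w_triples n c = {(x, y, z). x \<in> octV n \<and> y \<in> octV n \<and> z \<in> octV n \<and>
      x \<noteq> y \<and> y \<noteq> z \<and> x \<noteq> z \<and>
      (type_s n x y \<or> type_w n c x y) \<and> (type_s n y z \<or> type_w n c y z) \<and>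
      (type_s n z x \<or> type_w n c z x) \<and>
      (type_w n c x y \<or> type_w n c y z \<or> type_w n c z x)}"

definition num_C3w :: "nat \<Rightarrow> (vtx \<Rightarrow> vtx) \<Rightarrow> nat" where
  "num_C3w n c = card ((\<lambda>(x, y, z). {(x, y, z), (y, z, x), (z, x, y)}) ` C3w_triples n c)"

end

theory Submission
  imports Defs "HOL-Analysis.Harmonic_Numbers" "HOL-Real_Asymp.Real_Asymp"
begin

(* A vertex u chooses v with probability Z_u / d_uv^2 <= Z_u. Some coordinate of u has absolute
   value at least n/3; shifting the other two coordinates by 0..m (m = n div 6) and correcting the
   large one gives a grid of vertices at distance at most i + j from u, and summing d^-2 over it
   shows 1/Z_u >= ln(m+1)/4. So every choice probability is O(1/ln n).

   Rotating a counted C3 so that a w-edge (x,y) comes first, it suffices to bound, over distinct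
   x, y, z, the probability that x chooses y and that (y,z) and (z,x) are each an edge of G'_n or a
   choice. By independence of the choices this is p_xy (A_yz + p_yz) (A_zx + p_zx), where A is the
   adjacency matrix and p the matrix of choice probabilities. Rows of p sum to 1 and rows of A to
   at most 27, so for fixed x the sum over y, z is at most 28^2 max p, and there are O(n^2)
   vertices. *)

lemma measure_Pi_pmf_components:
  assumes "finite A" and "J \<subseteq> A"
  shows "measure_pmf.prob (Pi_pmf A d q) {f. \<forall>j\<in>J. f j \<in> B j}
           = (\<Prod>j\<in>J. measure_pmf.prob (q j) (B j))"
proof -
  have "{f. \<forall>j\<in>J. f j \<in> B j} = Pi A (\<lambda>j. if j \<in> J then B j else UNIV)"
    using assms by (auto simp: Pi_def)
  then have "measure_pmf.prob (Pi_pmf A d q) {f. \<forall>j\<in>J. f j \<in> B j}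
      = (\<Prod>j\<in>A. measure_pmf.prob (q j) (if j \<in> J then B j else UNIV))"
    using assms by (simp add: measure_Pi_pmf_Pi)
  also have "\<dots> = (\<Prod>j\<in>J. measure_pmf.prob (q j) (B j))"
    using assms by (intro prod.mono_neutral_cong_right) auto
  finally show ?thesis .
qed

lemma expectation_card_eq_sum_prob:
  assumes "finite T"
  shows "measure_pmf.expectation M (\<lambda>\<omega>. real (card {t\<in>T. \<omega> \<in> E t}))
           = (\<Sum>t\<in>T. measure_pmf.prob M (E t))"
proof -
  have "(\<lambda>\<omega>. real (card {t\<in>T. \<omega> \<in> E t})) = (\<lambda>\<omega>. \<Sum>t\<in>T. indicator (E t) \<omega>)"
    using assms by (auto simp: indicator_def Int_def)
  moreover have "integrable M (indicator (E t) :: _ \<Rightarrow> real)" for t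
    by (rule measure_pmf.integrable_const_bound[where B = 1]) auto
  ultimately show ?thesis by (simp add: Bochner_Integration.integral_sum)
qed

lemma measure_pmf_disj_eq_le: "measure_pmf.prob q {v. P \<or> v = a} \<le> of_bool P + pmf q a"
  by (cases P) (simp_all add: measure_pmf_single)

definition distinct_triples :: "'a set \<Rightarrow> ('a \<times> 'a \<times> 'a) set" where
  "distinct_triples V = {(x, y, z). x \<in> V \<and> y \<in> V \<and> z \<in> V \<and> x \<noteq> y \<and> y \<noteq> z \<and> x \<noteq> z}"

lemma distinct_triples_subset: "distinct_triples V \<subseteq> V \<times> V \<times> V"
  by (auto simp: distinct_triples_def)

lemma finite_distinct_triples: "finite V \<Longrightarrow> finite (distinct_triples V)"
  by (rule finite_subset[OF distinct_triples_subset]) auto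

locale triangle_kernels =
  fixes V :: "'a set" and A p :: "'a \<Rightarrow> 'a \<Rightarrow> real" and D M :: real
  assumes A_nonneg: "\<And>a b. 0 \<le> A a b" and p_nonneg: "\<And>a b. 0 \<le> p a b"
    and A_sym: "\<And>a b. A a b = A b a"
    and A_row: "\<And>a. (\<Sum>b\<in>V. A a b) \<le> D"
    and p_le: "\<And>a b. a \<in> V \<Longrightarrow> p a b \<le> M"
    and p_row: "\<And>a. a \<in> V \<Longrightarrow> (\<Sum>b\<in>V. p a b) \<le> 1"
begin

lemma D_nonneg: "0 \<le> D"
  using order.trans[OF sum_nonneg A_row] A_nonneg by blast

lemma M_nonneg: "x \<in> V \<Longrightarrow> 0 \<le> M"
  using p_le[of x x] p_nonneg[of x x] by linarith

lemma sum_row_le: "y \<in> V \<Longrightarrow> (\<Sum>z\<in>V. A y z + p y z) \<le> D + 1"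
  using A_row[of y] p_row[of y] by (simp add: sum.distrib)

lemma sum_two_step_le:
  assumes "x \<in> V"
  shows "(\<Sum>y\<in>V. p x y * (A y z + p y z)) \<le> (D + 1) * M"
proof -
  have "(\<Sum>y\<in>V. p x y * A y z) \<le> (\<Sum>y\<in>V. M * A z y)"
    using assms by (intro sum_mono) (simp add: A_sym mult_right_mono A_nonneg p_le)
  also have "\<dots> \<le> M * D"
    using A_row[of z] M_nonneg[OF assms] by (simp add: sum_distrib_left[symmetric] mult_left_mono)
  finally have "(\<Sum>y\<in>V. p x y * A y z) \<le> M * D" .
  moreover have "(\<Sum>y\<in>V. p x y * p y z) \<le> (\<Sum>y\<in>V. p x y * M)"
    by (intro sum_mono mult_left_mono p_le p_nonneg)
  moreover have "(\<Sum>y\<in>V. p x y * M) \<le> M"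
    using mult_right_mono[OF p_row[OF assms] M_nonneg[OF assms]] by (simp add: sum_distrib_right)
  ultimately show ?thesis by (simp add: distrib_left sum.distrib algebra_simps)
qed

lemma sum_triangle_at_le:
  assumes x: "x \<in> V"
  shows "(\<Sum>y\<in>V. \<Sum>z\<in>V. p x y * (A y z + p y z) * (A z x + p z x)) \<le> (D + 1)^2 * M"
proof -
  let ?B = "\<lambda>a b. A a b + p a b"
  note M_nonneg = M_nonneg[OF x]
  have "(\<Sum>y\<in>V. \<Sum>z\<in>V. p x y * ?B y z * A z x) = (\<Sum>z\<in>V. (\<Sum>y\<in>V. p x y * ?B y z) * A z x)"
    by (subst sum.swap) (simp add: sum_distrib_right)
  also have "\<dots> \<le> (\<Sum>z\<in>V. (D + 1) * M * A x z)"
    using x M_nonneg D_nonneg by (intro sum_mono mult_mono sum_two_step_le) (auto simp: A_sym A_nonneg)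
  also have "\<dots> \<le> (D + 1) * M * D"
    using A_row[of x] M_nonneg D_nonneg by (simp add: sum_distrib_left[symmetric] mult_left_mono)
  finally have A_part: "(\<Sum>y\<in>V. \<Sum>z\<in>V. p x y * ?B y z * A z x) \<le> (D + 1) * M * D" .
  have "(\<Sum>y\<in>V. \<Sum>z\<in>V. p x y * ?B y z * p z x) \<le> (\<Sum>y\<in>V. \<Sum>z\<in>V. p x y * ?B y z * M)"
    using x by (intro sum_mono mult_left_mono p_le) (simp_all add: A_nonneg p_nonneg)
  also have "\<dots> = (\<Sum>y\<in>V. p x y * ((\<Sum>z\<in>V. ?B y z) * M))"
    by (simp add: sum_distrib_left sum_distrib_right mult.assoc)
  also have "\<dots> \<le> (\<Sum>y\<in>V. p x y * ((D + 1) * M))"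
    using M_nonneg sum_row_le by (intro sum_mono mult_left_mono mult_right_mono p_nonneg) auto
  also have "\<dots> \<le> (D + 1) * M"
    using mult_right_mono[OF p_row[OF x], of "(D + 1) * M"] M_nonneg D_nonneg
    by (simp add: sum_distrib_right[symmetric])
  finally have p_part: "(\<Sum>y\<in>V. \<Sum>z\<in>V. p x y * ?B y z * p z x) \<le> (D + 1) * M" .
  have "(\<Sum>y\<in>V. \<Sum>z\<in>V. p x y * ?B y z * ?B z x)
      = (\<Sum>y\<in>V. \<Sum>z\<in>V. p x y * ?B y z * A z x) + (\<Sum>y\<in>V. \<Sum>z\<in>V. p x y * ?B y z * p z x)"
    by (simp add: distrib_left sum.distrib)
  also have "\<dots> \<le> (D + 1)^2 * M"
    using A_part p_part by (simp add: power2_eq_square algebra_simps)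
  finally show ?thesis .
qed

lemma sum_triangle_le:
  "(\<Sum>x\<in>V. \<Sum>y\<in>V. \<Sum>z\<in>V. p x y * (A y z + p y z) * (A z x + p z x)) \<le> card V * ((D + 1)^2 * M)"
  using sum_mono[of V _ "\<lambda>_. (D + 1)^2 * M", OF sum_triangle_at_le] by simp

end

definition near :: "vtx \<Rightarrow> vtx \<Rightarrow> bool" where
  "near v w \<longleftrightarrow> \<bar>c1 v - c1 w\<bar> \<le> 1 \<and> \<bar>c2 v - c2 w\<bar> \<le> 1 \<and> \<bar>c3 v - c3 w\<bar> \<le> 1"

lemma octAdj_iff_near: "octAdj n v w \<longleftrightarrow> v \<in> octV n \<and> w \<in> octV n \<and> v \<noteq> w \<and> near v w"
  unfolding octAdj_def near_def by auto

lemma octAdj_sym: "octAdj n v w \<longleftrightarrow> octAdj n w v"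
  unfolding octAdj_def by (auto simp: abs_minus_commute)

lemma near_subset_box:
  "{w. near (a, b, c) w} \<subseteq> {a-1..a+1} \<times> {b-1..b+1} \<times> {c-1..c+1}"
  by (auto simp: near_def c1_def c2_def c3_def abs_le_iff)

lemma card_near_le: "card {w. near v w} \<le> 27"
proof -
  obtain a b c where v: "v = (a, b, c)" by (cases v) auto
  have "card {w. near v w} \<le> card ({a-1..a+1} \<times> {b-1..b+1} \<times> {c-1..c+1})"
    unfolding v by (rule card_mono[OF _ near_subset_box]) auto
  also have "\<dots> = 27" by (simp add: card_cartesian_product)
  finally show ?thesis .
qed

lemma finite_near: "finite {w. near v w}"
  by (cases v) (auto intro: finite_subset[OF near_subset_box])

lemma octV_subset_image:
  "octV n \<subseteq> (\<lambda>(a, b, s). (a, b, s * (int n - \<bar>a\<bar> - \<bar>b\<bar>))) `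
     ({-int n..int n} \<times> {-int n..int n} \<times> {-1, 1})"
proof
  fix u assume "u \<in> octV n"
  then obtain a b c where u: "u = (a, b, c)" "\<bar>a\<bar> + \<bar>b\<bar> + \<bar>c\<bar> = int n"
    unfolding octV_def c1_def c2_def c3_def by (cases u) auto
  show "u \<in> (\<lambda>(a, b, s). (a, b, s * (int n - \<bar>a\<bar> - \<bar>b\<bar>))) `
     ({-int n..int n} \<times> {-int n..int n} \<times> {-1, 1})"
    using u by (intro image_eqI[where x = "(a, b, if c \<ge> 0 then 1 else -1)"]) auto
qed

lemma finite_octV: "finite (octV n)"
  by (rule finite_subset[OF octV_subset_image]) auto

lemma card_octV_le: "card (octV n) \<le> 2 * (2 * n + 1)^2"
proof -
  have "card (octV n) \<le> card ({-int n..int n} \<times> {-int n..int n} \<times> {-1::int, 1})"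
    by (rule surj_card_le[OF _ octV_subset_image]) auto
  also have "\<dots> = 2 * (2 * n + 1)^2"
    by (simp add: card_cartesian_product power2_eq_square nat_add_distrib nat_mult_distrib)
  finally show ?thesis .
qed

lemma sum_octAdj_le: "(\<Sum>w\<in>octV n. of_bool (octAdj n v w) :: real) \<le> 27"
proof -
  have "(\<Sum>w\<in>octV n. of_bool (octAdj n v w) :: real) = real (card {w\<in>octV n. octAdj n v w})"
    by (simp add: finite_octV Int_def)
  also have "card {w\<in>octV n. octAdj n v w} \<le> card {w. near v w}"
    by (rule card_mono[OF finite_near]) (auto simp: octAdj_iff_near)
  finally show ?thesis using card_near_le[of v] by linarith
qed

lemma octDist_le_path:
  assumes "p 0 = u" "p k = v" "\<forall>i<k. octAdj n (p i) (p (Suc i))"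
  shows "octDist n u v \<le> k"
  unfolding octDist_def by (rule Least_le) (use assms in blast)

(* octDist is 0 also for unreachable pairs (LEAST of an empty set), hence the path. *)
lemma octDist_pos:
  assumes "p 0 = u" "p k = v" "\<forall>i<k. octAdj n (p i) (p (Suc i))" and "u \<noteq> v"
  shows "1 \<le> octDist n u v"
proof -
  have "\<exists>q. q 0 = u \<and> q (octDist n u v) = v \<and> (\<forall>i<octDist n u v. octAdj n (q i) (q (Suc i)))"
    unfolding octDist_def by (rule LeastI[of _ k]) (use assms in blast)
  then show ?thesis using \<open>u \<noteq> v\<close> by (cases "octDist n u v") auto
qed

locale octahedral_grid =
  fixes n m :: nat and w :: "nat \<Rightarrow> nat \<Rightarrow> vtx"
  assumes inj: "inj_on (\<lambda>(i, j). w i j) ({..m} \<times> {..m})"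
    and mem: "\<And>i j. i \<le> m \<Longrightarrow> j \<le> m \<Longrightarrow> w i j \<in> octV n"
    and near_Suc_fst: "\<And>i j. i < m \<Longrightarrow> j \<le> m \<Longrightarrow> near (w i j) (w (Suc i) j)"
    and near_Suc_snd: "\<And>i j. i \<le> m \<Longrightarrow> j < m \<Longrightarrow> near (w i j) (w i (Suc j))"
begin

lemma w_neq:
  assumes "i \<le> m" "j \<le> m" "i' \<le> m" "j' \<le> m" "(i, j) \<noteq> (i', j')"
  shows "w i j \<noteq> w i' j'"
  using inj_onD[OF inj, of "(i, j)" "(i', j')"] assms by auto

lemma path_to_grid_point:
  assumes "i \<le> m" "j \<le> m"
  obtains p where "p 0 = w 0 0" "p (i + j) = w i j" "\<forall>t<i+j. octAdj n (p t) (p (Suc t))"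
proof -
  define p where "p t = (if t \<le> i then w t 0 else w i (t - i))" for t
  have "octAdj n (p t) (p (Suc t))" if "t < i + j" for t
  proof (cases "t < i")
    case True
    then show ?thesis using assms w_neq[of t 0 "Suc t" 0] unfolding octAdj_iff_near
      by (auto simp: p_def intro!: mem near_Suc_fst)
  next
    case False
    then have "p t = w i (t - i)" "p (Suc t) = w i (Suc (t - i))"
      by (auto simp: p_def Suc_diff_le)
    then show ?thesis using assms that w_neq[of i "t - i" i "Suc (t - i)"] unfolding octAdj_iff_near
      by (auto intro!: mem near_Suc_snd)
  qed
  moreover have "p 0 = w 0 0" "p (i + j) = w i j" by (auto simp: p_def)
  ultimately show thesis using that by blast
qed

lemma octDist_le:
  assumes "i \<le> m" "j \<le> m"
  shows "octDist n (w 0 0) (w i j) \<le> i + j"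
proof -
  obtain p where "p 0 = w 0 0" "p (i + j) = w i j" "\<forall>t<i+j. octAdj n (p t) (p (Suc t))"
    using path_to_grid_point[OF assms] .
  then show ?thesis by (rule octDist_le_path)
qed

lemma octDist_ge_1:
  assumes "i \<le> m" "j \<le> m" "(i, j) \<noteq> (0, 0)"
  shows "1 \<le> octDist n (w 0 0) (w i j)"
proof -
  obtain p where "p 0 = w 0 0" "p (i + j) = w i j" "\<forall>t<i+j. octAdj n (p t) (p (Suc t))"
    using path_to_grid_point[OF assms(1,2)] .
  moreover have "w 0 0 \<noteq> w i j" using assms by (intro w_neq) auto
  ultimately show ?thesis by (rule octDist_pos)
qed

lemma ln_le_normaliser_sum_corner:
  "ln (real m + 1) / 4 \<le> (\<Sum>v\<in>octV n - {w 0 0}. 1 / real (octDist n (w 0 0) v)^2)"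
proof -
  define T where "T = Sigma {1..m} (\<lambda>i. {..<i})"
  let ?f = "\<lambda>v. 1 / real (octDist n (w 0 0) v)^2"
  have inj_T: "inj_on (\<lambda>(i, j). w i j) T"
    by (rule inj_on_subset[OF inj]) (auto simp: T_def)
  have "(\<lambda>(i, j). w i j) ` T \<subseteq> octV n - {w 0 0}"
  proof (rule image_subsetI)
    fix t assume "t \<in> T"
    then obtain i j where t: "t = (i, j)" "1 \<le> i" "i \<le> m" "j < i" by (auto simp: T_def)
    then show "(case t of (i, j) \<Rightarrow> w i j) \<in> octV n - {w 0 0}"
      using w_neq[of 0 0 i j] by (auto intro: mem)
  qed
  then have "(\<Sum>v\<in>(\<lambda>(i, j). w i j) ` T. ?f v) \<le> (\<Sum>v\<in>octV n - {w 0 0}. ?f v)"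
    by (rule sum_mono2[rotated]) (auto simp: finite_octV)
  moreover have "(\<Sum>v\<in>(\<lambda>(i, j). w i j) ` T. ?f v) = (\<Sum>(i, j)\<in>T. ?f (w i j))"
    by (subst sum.reindex[OF inj_T]) (simp add: case_prod_unfold)
  moreover have "1 / (4 * real i^2) \<le> ?f (w i j)" if "(i, j) \<in> T" for i j
  proof -
    have ij: "1 \<le> i" "i \<le> m" "j < i" using that by (auto simp: T_def)
    have "1 \<le> real (octDist n (w 0 0) (w i j))" "real (octDist n (w 0 0) (w i j)) \<le> 2 * real i"
      using octDist_ge_1[of i j] octDist_le[of i j] ij by auto
    then have "real (octDist n (w 0 0) (w i j))^2 \<le> (2 * real i)^2" by (intro power_mono) auto
    then have "1 / (2 * real i)^2 \<le> ?f (w i j)"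
      using \<open>1 \<le> real (octDist n (w 0 0) (w i j))\<close> by (intro frac_le) auto
    then show ?thesis by (simp add: power_mult_distrib)
  qed
  then have "(\<Sum>(i, j)\<in>T. 1 / (4 * real i^2)) \<le> (\<Sum>(i, j)\<in>T. ?f (w i j))"
    by (intro sum_mono) auto
  moreover have "(\<Sum>(i, j)\<in>T. 1 / (4 * real i^2)) = (\<Sum>i=1..m. \<Sum>j<i. 1 / (4 * real i^2))"
    unfolding T_def by (rule sum.Sigma[symmetric]) auto
  moreover have "\<dots> = harm m / 4"
    unfolding harm_def sum_divide_distrib by (intro sum.cong refl) (simp add: power2_eq_square field_simps)
  moreover have "ln (real m + 1) \<le> harm m" by (rule ln_le_harm)
  ultimately show ?thesis by linarith
qed

end

(* Cyclic rotation of coordinates is an automorphism of G'_n; it reduces the normaliser bound to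
   vertices with a large first coordinate. *)
definition rot3 :: "vtx \<Rightarrow> vtx" where
  "rot3 = (\<lambda>(a, b, c). (b, c, a))"

lemma rot3_rot3_rot3 [simp]: "rot3 (rot3 (rot3 u)) = u"
  by (cases u) (simp add: rot3_def)

lemma rot3_in_octV_iff [simp]: "rot3 u \<in> octV n \<longleftrightarrow> u \<in> octV n"
  by (cases u) (auto simp: rot3_def octV_def c1_def c2_def c3_def)

lemma near_rot3_iff [simp]: "near (rot3 u) (rot3 v) \<longleftrightarrow> near u v"
  by (cases u; cases v) (auto simp: rot3_def near_def c1_def c2_def c3_def)

lemma octahedral_grid_rot3:
  assumes "octahedral_grid n m w"
  shows "octahedral_grid n m (\<lambda>i j. rot3 (w i j))"
proof -
  interpret octahedral_grid n m w by (fact assms)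
  have "inj rot3" by (metis rot3_rot3_rot3 injI)
  then have "inj_on (\<lambda>(i, j). rot3 (w i j)) ({..m} \<times> {..m})"
    using comp_inj_on[OF inj inj_on_subset[of rot3 UNIV]] by (simp add: o_def case_prod_unfold)
  then show ?thesis
    by unfold_locales (auto intro!: mem near_Suc_fst near_Suc_snd)
qed

lemma octahedral_grid_at:
  assumes u: "(a, b, c) \<in> octV n" and large: "2 * int m \<le> \<bar>a\<bar>"
  obtains w where "octahedral_grid n m w" "w 0 0 = (a, b, c)"
proof -
  have n: "\<bar>a\<bar> + \<bar>b\<bar> + \<bar>c\<bar> = int n" using u by (simp add: octV_def c1_def c2_def c3_def)
  define w where "w i j = (let x = int n - \<bar>b + int i\<bar> - \<bar>c + int j\<bar> in if 0 \<le> a then x else -x,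
      b + int i, c + int j)" for i j
  have "octahedral_grid n m w"
  proof
    show "inj_on (\<lambda>(i, j). w i j) ({..m} \<times> {..m})" by (auto simp: inj_on_def w_def Let_def)
  next
    fix i j assume "i \<le> m" "j \<le> m"
    then have "0 \<le> int n - \<bar>b + int i\<bar> - \<bar>c + int j\<bar>" using n large by linarith
    then show "w i j \<in> octV n" by (auto simp: w_def Let_def octV_def c1_def c2_def c3_def)
  next
    fix i j
    show "near (w i j) (w (Suc i) j)" by (simp add: w_def Let_def near_def c1_def c2_def c3_def) arith
  next
    fix i j
    show "near (w i j) (w i (Suc j))" by (simp add: w_def Let_def near_def c1_def c2_def c3_def) arith
  qed
  moreover have "w 0 0 = (a, b, c)" using n by (auto simp: w_def Let_def)
  ultimately show thesis using that by blast
qed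

lemma ln_le_normaliser_sum:
  assumes u: "u \<in> octV n" and "6 * m \<le> n"
  shows "ln (real m + 1) / 4 \<le> (\<Sum>v\<in>octV n - {u}. 1 / real (octDist n u v)^2)"
proof -
  obtain a b c where u_eq: "u = (a, b, c)" by (cases u) auto
  have rot: "rot3 u = (b, c, a)" "rot3 (rot3 u) = (c, a, b)" by (simp_all add: u_eq rot3_def)
  then have rot_mem: "(b, c, a) \<in> octV n" "(c, a, b) \<in> octV n"
    using u rot3_in_octV_iff by metis+
  have "\<bar>a\<bar> + \<bar>b\<bar> + \<bar>c\<bar> = int n" using u by (simp add: u_eq octV_def c1_def c2_def c3_def)
  then consider "2 * int m \<le> \<bar>a\<bar>" | "2 * int m \<le> \<bar>b\<bar>" | "2 * int m \<le> \<bar>c\<bar>"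
    using \<open>6 * m \<le> n\<close> by linarith
  then obtain w where "octahedral_grid n m w" "w 0 0 = u"
  proof cases
    case 1
    then show ?thesis using that octahedral_grid_at[of a b c] u by (auto simp: u_eq)
  next
    case 2
    obtain w where "octahedral_grid n m w" "w 0 0 = rot3 u"
      using octahedral_grid_at[of b c a n m] 2 rot rot_mem by metis
    then show ?thesis using that[of "\<lambda>i j. rot3 (rot3 (w i j))"] by (simp add: octahedral_grid_rot3)
  next
    case 3
    obtain w where "octahedral_grid n m w" "w 0 0 = rot3 (rot3 u)"
      using octahedral_grid_at[of c a b n m] 3 rot rot_mem by metis
    then show ?thesis using that[of "\<lambda>i j. rot3 (w i j)"] by (simp add: octahedral_grid_rot3)
  qed
  then show ?thesis using octahedral_grid.ln_le_normaliser_sum_corner by blast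
qed

lemma pmf_choice_pmf_le_Zc:
  assumes pos: "0 < (\<Sum>w\<in>octV n - {u}. 1 / real (octDist n u w)^2)"
  shows "pmf (choice_pmf n u) v \<le> Zc n u"
proof -
  let ?f = "\<lambda>v. if v \<in> octV n \<and> v \<noteq> u then Zc n u / real (octDist n u v)^2 else 0"
  have Z_pos: "0 < Zc n u" using pos by (simp add: Zc_def)
  have f_nonneg: "0 \<le> ?f v" for v using Z_pos by auto
  have "(\<integral>\<^sup>+v. ennreal (?f v) \<partial>count_space UNIV) = (\<integral>\<^sup>+v. ennreal (?f v) \<partial>count_space (octV n - {u}))"
    by (subst nn_integral_count_space_indicator) (auto intro!: nn_integral_cong split: split_indicator)
  also have "\<dots> = (\<Sum>v\<in>octV n - {u}. ennreal (?f v))"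
    by (rule nn_integral_count_space_finite) (simp add: finite_octV)
  also have "\<dots> = ennreal (\<Sum>v\<in>octV n - {u}. ?f v)"
    by (rule sum_ennreal) (rule f_nonneg)
  also have "(\<Sum>v\<in>octV n - {u}. ?f v) = Zc n u * (\<Sum>w\<in>octV n - {u}. 1 / real (octDist n u w)^2)"
    by (simp add: sum_distrib_left)
  also have "\<dots> = 1" using pos by (simp add: Zc_def)
  finally have "(\<integral>\<^sup>+v. ennreal (?f v) \<partial>count_space UNIV) = 1" by simp
  then have "pmf (choice_pmf n u) v = ?f v"
    unfolding choice_pmf_def using f_nonneg by (subst pmf_embed_pmf) auto
  also have "?f v \<le> Zc n u"
    using Z_pos by (cases "octDist n u v") (auto simp: divide_le_eq)
  finally show ?thesis .
qed

lemma pmf_choice_pmf_le_ln: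
  assumes "u \<in> octV n" and "7 \<le> n"
  shows "pmf (choice_pmf n u) v \<le> 4 / ln (real n / 6)"
proof -
  define m where "m = n div 6"
  have "ln (real n / 6) \<le> ln (real m + 1)"
    using \<open>7 \<le> n\<close> by (subst ln_le_cancel_iff) (auto simp: m_def)
  moreover have "0 < ln (real n / 6)" using \<open>7 \<le> n\<close> by simp
  moreover have "ln (real m + 1) / 4 \<le> (\<Sum>w\<in>octV n - {u}. 1 / real (octDist n u w)^2)"
    using assms by (intro ln_le_normaliser_sum) (auto simp: m_def)
  ultimately have "4 / ln (real n / 6) \<ge> inverse (\<Sum>w\<in>octV n - {u}. 1 / real (octDist n u w)^2)"
    and "0 < (\<Sum>w\<in>octV n - {u}. 1 / real (octDist n u w)^2)"
    by (auto simp: field_simps le_divide_eq)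
  then show ?thesis
    using pmf_choice_pmf_le_Zc[of n u v] by (simp add: Zc_def)
qed

definition triangle_event :: "nat \<Rightarrow> vtx \<Rightarrow> vtx \<Rightarrow> vtx \<Rightarrow> (vtx \<Rightarrow> vtx) set" where
  "triangle_event n x y z = {c. c x = y \<and> (octAdj n y z \<or> c y = z) \<and> (octAdj n z x \<or> c z = x)}"

lemma prob_triangle_event_le:
  assumes "(x, y, z) \<in> distinct_triples (octV n)"
  shows "measure_pmf.prob (osw_pmf n) (triangle_event n x y z)
    \<le> pmf (choice_pmf n x) y * (of_bool (octAdj n y z) + pmf (choice_pmf n y) z)
         * (of_bool (octAdj n z x) + pmf (choice_pmf n z) x)" (is "_ \<le> ?bound")
proof -
  have distinct: "x \<noteq> y" "y \<noteq> z" "x \<noteq> z" using assms by (auto simp: distinct_triples_def)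
  define B where "B j = (if j = x then {y} else if j = y then {v. octAdj n y z \<or> v = z}
    else {v. octAdj n z x \<or> v = x})" for j
  have "triangle_event n x y z = {c. \<forall>j\<in>{x, y, z}. c j \<in> B j}"
    using assms by (auto simp: triangle_event_def B_def distinct_triples_def)
  moreover have "measure_pmf.prob (osw_pmf n) {c. \<forall>j\<in>{x, y, z}. c j \<in> B j}
      = (\<Prod>j\<in>{x, y, z}. measure_pmf.prob (choice_pmf n j) (B j))"
    unfolding osw_pmf_def using assms
    by (intro measure_Pi_pmf_components finite_octV) (auto simp: distinct_triples_def)
  ultimately have "measure_pmf.prob (osw_pmf n) (triangle_event n x y z)
      = (\<Prod>j\<in>{x, y, z}. measure_pmf.prob (choice_pmf n j) (B j))"
    by simp
  also have "\<dots> = pmf (choice_pmf n x) y * measure_pmf.prob (choice_pmf n y) {v. octAdj n y z \<or> v = z}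
      * measure_pmf.prob (choice_pmf n z) {v. octAdj n z x \<or> v = x}"
    using distinct by (simp add: B_def measure_pmf_single mult.assoc)
  also have "\<dots> \<le> ?bound"
    by (intro mult_mono measure_pmf_disj_eq_le) auto
  finally show ?thesis .
qed

(* Each rotation class of counted triples contains a triple whose first pair is of type w. *)
lemma num_C3w_le_card_triangle_events:
  "num_C3w n c \<le> card {(x, y, z) \<in> distinct_triples (octV n). c \<in> triangle_event n x y z}"
proof -
  let ?class = "\<lambda>(x, y, z). {(x, y, z), (y, z, x), (z, x, y)}"
  let ?W = "{(x, y, z) \<in> C3w_triples n c. type_w n c x y}"
  have finite_C3w: "finite (C3w_triples n c)"
    by (rule finite_subset[of _ "octV n \<times> octV n \<times> octV n"]) (auto simp: C3w_triples_def finite_octV)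
  have finite_W: "finite ?W" by (rule finite_subset[OF _ finite_C3w]) auto
  have rotate: "(y, z, x) \<in> C3w_triples n c" if "(x, y, z) \<in> C3w_triples n c" for x y z
    using that by (auto simp: C3w_triples_def)
  have "?class ` C3w_triples n c \<subseteq> ?class ` ?W"
  proof
    fix C assume "C \<in> ?class ` C3w_triples n c"
    then obtain x y z where t: "(x, y, z) \<in> C3w_triples n c" "C = ?class (x, y, z)" by auto
    then consider "type_w n c x y" | "type_w n c y z" | "type_w n c z x"
      by (auto simp: C3w_triples_def)
    then show "C \<in> ?class ` ?W"
    proof cases
      case 1
      then show ?thesis using t by (intro image_eqI[where x = "(x, y, z)"]) auto
    next
      case 2
      then show ?thesis using t rotate by (intro image_eqI[where x = "(y, z, x)"]) auto
    next
      case 3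
      then show ?thesis using t rotate by (intro image_eqI[where x = "(z, x, y)"]) auto
    qed
  qed
  then have "num_C3w n c \<le> card (?class ` ?W)"
    unfolding num_C3w_def using finite_W by (intro card_mono finite_imageI)
  also have "\<dots> \<le> card ?W"
    using finite_W by (rule card_image_le)
  also have "\<dots> \<le> card {(x, y, z) \<in> distinct_triples (octV n). c \<in> triangle_event n x y z}"
    by (intro card_mono finite_subset[OF _ finite_distinct_triples[OF finite_octV]])
       (auto simp: C3w_triples_def distinct_triples_def triangle_event_def type_s_def type_w_def)
  finally show ?thesis .
qed

lemma expectation_num_C3w_le:
  fixes M :: real
  assumes pmf_le: "\<And>u v. u \<in> octV n \<Longrightarrow> pmf (choice_pmf n u) v \<le> M"
  shows "measure_pmf.expectation (osw_pmf n) (\<lambda>c. real (num_C3w n c))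
           \<le> real (card (octV n)) * (28^2 * M)"
proof -
  let ?V = "octV n"
  let ?T = "distinct_triples ?V"
  let ?E = "\<lambda>(x, y, z). triangle_event n x y z"
  let ?N = "\<lambda>c. real (card {t\<in>?T. c \<in> ?E t})"
  let ?A = "\<lambda>a b. of_bool (octAdj n a b) :: real"
  let ?p = "\<lambda>a b. pmf (choice_pmf n a) b"
  let ?bound = "\<lambda>x y z. ?p x y * (?A y z + ?p y z) * (?A z x + ?p z x)"
  have fin_T: "finite ?T" by (rule finite_distinct_triples[OF finite_octV])
  have "{t\<in>?T. c \<in> ?E t} = {(x, y, z) \<in> ?T. c \<in> triangle_event n x y z}" for c
    by auto
  then have num_le: "real (num_C3w n c) \<le> ?N c" for c
    using num_C3w_le_card_triangle_events[of n c] by simp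
  have N_le: "?N c \<le> card ?T" for c
    using fin_T by (simp add: card_mono)
  have "measure_pmf.expectation (osw_pmf n) (\<lambda>c. real (num_C3w n c))
      \<le> measure_pmf.expectation (osw_pmf n) ?N"
    using num_le N_le order.trans[OF num_le N_le]
    by (intro integral_mono measure_pmf.integrable_const_bound[where B = "card ?T"]) auto
  also have "\<dots> = (\<Sum>t\<in>?T. measure_pmf.prob (osw_pmf n) (?E t))"
    using fin_T by (rule expectation_card_eq_sum_prob)
  also have "\<dots> \<le> (\<Sum>(x, y, z)\<in>?T. ?bound x y z)"
    by (intro sum_mono) (auto intro: prob_triangle_event_le)
  also have "\<dots> \<le> (\<Sum>(x, y, z)\<in>?V \<times> ?V \<times> ?V. ?bound x y z)"
    by (intro sum_mono2 distinct_triples_subset) (auto simp: finite_octV)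
  also have "\<dots> = (\<Sum>x\<in>?V. \<Sum>y\<in>?V. \<Sum>z\<in>?V. ?bound x y z)"
    by (simp add: sum.cartesian_product)
  also have "\<dots> \<le> real (card ?V) * ((27 + 1)^2 * M)"
  proof (rule triangle_kernels.sum_triangle_le, unfold_locales)
    show "(\<Sum>b\<in>?V. ?A a b) \<le> 27" for a by (rule sum_octAdj_le)
    show "(\<Sum>b\<in>?V. ?p a b) \<le> 1" for a
      using measure_pmf.prob_le_1[of "choice_pmf n a" ?V]
      by (simp add: measure_measure_pmf_finite[OF finite_octV])
  qed (auto simp: octAdj_sym pmf_le)
  finally show ?thesis by simp
qed

theorem theorem4:
  shows "(\<lambda>n. measure_pmf.expectation (osw_pmf n) (\<lambda>c. real (num_C3w n c)))
           \<in> O(\<lambda>n. real n ^ 2 / ln (real n))"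
proof -
  define bound where "bound n = 2 * (2 * real n + 1)^2 * (28^2 * (4 / ln (real n / 6)))" for n
  have "\<forall>\<^sub>F n in sequentially.
          norm (measure_pmf.expectation (osw_pmf n) (\<lambda>c. real (num_C3w n c))) \<le> norm (bound n)"
    using eventually_ge_at_top[of 7]
  proof eventually_elim
    case (elim n)
    then have ln_pos: "0 < ln (real n / 6)" by simp
    have "measure_pmf.expectation (osw_pmf n) (\<lambda>c. real (num_C3w n c))
        \<le> card (octV n) * (28^2 * (4 / ln (real n / 6)))"
      using elim by (intro expectation_num_C3w_le pmf_choice_pmf_le_ln)
    also have "\<dots> \<le> bound n"
      unfolding bound_def using of_nat_mono[OF card_octV_le[of n], where 'a = real] ln_pos
      by (intro mult_right_mono) (auto simp: add.commute)
    finally show ?case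
      using ln_pos by (simp add: bound_def Bochner_Integration.integral_nonneg)
  qed
  then have "(\<lambda>n. measure_pmf.expectation (osw_pmf n) (\<lambda>c. real (num_C3w n c))) \<in> O(bound)"
    by (rule landau_o.big_mono)
  moreover have "bound \<in> O(\<lambda>n. real n ^ 2 / ln (real n))"
    unfolding bound_def by real_asymp
  ultimately show ?thesis by (rule landau_o.big_trans)
qed

end
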